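(* Let \[ M=\begin{pmatrix} \frac15&\frac15&\frac15&\frac15&\frac15\\ \frac35&\frac12&\frac3{10}&0&-\frac25\\ 1&\frac12&-\frac3{14}&-\frac47&\frac27\\ \frac75&0&-\frac45&\frac12&-\frac1{10}\\ \frac95&-\frac65&\frac{18}{35}&-\frac9{70}&\frac1{70} \end{pmatrix}. \] Consider real vectors $\tilde A=(\tilde A_0,\dots,\tilde A_4)$, $\tilde B=(\tilde B_0,\dots,\tilde B_4)$ satisfying: $\tilde A_0=\tilde B_0=1$; $0\le\tilde A_k\le\tilde B_k$ for $0\le k\le4$; $\sum_k\tilde A_k=\tfrac52$; $\sum_k\tilde B_k=10$; $\tilde B=2M\tilde A$; and $\tilde A_1=\tilde B_1$. Then the unique solution is \[ \tilde A=(1,0,0,0,\tfrac32),\qquad \tilde B=(1,0,\tfrac{20}7,\tfrac52,\tfrac{51}{14}). \]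
   Context: This is the normalized intrinsic linear program for two-dimensional codes detecting the adjoint (spin-1) sector inside the spin-2 irrep $V_2\cong\mathrm{Sym}^4(\mathbb C^2)$ of $\mathrm{SU}(2)$: $M$ is the unnormalized MacWilliams matrix $M_{k_1k_2}=(-1)^{4+k_1+k_2}(2k_1+1)\{\begin{smallmatrix}2&2&k_1\\2&2&k_2\end{smallmatrix}\}$ (Wigner $6j$-symbol), and the normalized enumerators of a code with projector $P$ are $\tilde A_k=\frac{N}{K^2}A_k(P,P)$, $\tilde B_k=\frac NK B_k(P,P)$ with $N=5$, $K=2$. *)

theory Defs
  imports Complex_Main
begin

text \<open>The normalized MacWilliams matrix M (rows/columns indexed 0..4).\<close>
definition Mmat :: "nat \<Rightarrow> nat \<Rightarrow> real" where
  "Mmat i j = [[1/5, 1/5, 1/5, 1/5, 1/5],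
               [3/5, 1/2, 3/10, 0, -2/5],
               [1, 1/2, -3/14, -4/7, 2/7],
               [7/5, 0, -4/5, 1/2, -1/10],
               [9/5, -6/5, 18/35, -9/70, 1/70]] ! i ! j"

definition LP_feasible :: "(nat \<Rightarrow> real) \<Rightarrow> (nat \<Rightarrow> real) \<Rightarrow> bool" where
  "LP_feasible A B \<longleftrightarrow>
     A 0 = 1 \<and> B 0 = 1 \<and>
     (\<forall>k<5. 0 \<le> A k \<and> A k \<le> B k) \<and>
     (\<Sum>k<5. A k) = 5/2 \<and> (\<Sum>k<5. B k) = 10 \<and>
     (\<forall>i<5. B i = 2 * (\<Sum>j<5. Mmat i j * A j)) \<and>
     A 1 = B 1"

end

theory Submission
  imports Defs
begin

text \<open>Expanding row 1 of \<open>B = 2 M A\<close> with \<open>A\<^sub>0 = 1\<close>, the condition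
  \<open>A\<^sub>1 = B\<^sub>1\<close> becomes \<open>4 A\<^sub>4 = 6 + 3 A\<^sub>2\<close>. Substituting this into
  \<open>A\<^sub>1 + A\<^sub>2 + A\<^sub>3 + A\<^sub>4 = 3/2\<close> leaves \<open>A\<^sub>1 + 7/4 A\<^sub>2 + A\<^sub>3 = 0\<close>, so
  nonnegativity forces \<open>A = (1,0,0,0,3/2)\<close>, and then \<open>B = 2 M A\<close> is determined.\<close>

lemma all_lessThan_5: "(\<forall>k<5. P k) \<longleftrightarrow> P 0 \<and> P 1 \<and> P 2 \<and> P 3 \<and> P (4::nat)"
  by (auto simp: less_Suc_eq numeral_eq_Suc)

lemma sum_lessThan_5:
  fixes f :: "nat \<Rightarrow> 'a::comm_monoid_add"
  shows "(\<Sum>k<5. f k) = f 0 + f 1 + f 2 + f 3 + f 4"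
  by (simp add: numeral_eq_Suc add.assoc)

lemma Mmat_transform:
  fixes A :: "nat \<Rightarrow> real"
  shows "2 * (\<Sum>j<5. Mmat 0 j * A j) = 2/5 * (\<Sum>j<5. A j)"
    and "2 * (\<Sum>j<5. Mmat 1 j * A j) = 6/5 * A 0 + A 1 + 3/5 * A 2 - 4/5 * A 4"
    and "2 * (\<Sum>j<5. Mmat 2 j * A j) = 2 * A 0 + A 1 - 3/7 * A 2 - 8/7 * A 3 + 4/7 * A 4"
    and "2 * (\<Sum>j<5. Mmat 3 j * A j) = 14/5 * A 0 - 8/5 * A 2 + A 3 - 1/5 * A 4"
    and "2 * (\<Sum>j<5. Mmat 4 j * A j) =
           18/5 * A 0 - 12/5 * A 1 + 36/35 * A 2 - 9/35 * A 3 + 1/35 * A 4"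
  by (simp_all add: sum_lessThan_5 Mmat_def algebra_simps)

lemma A_determined_by_row_1:
  fixes A :: "nat \<Rightarrow> real"
  assumes "A 0 = 1" and nonneg: "\<forall>k<5. 0 \<le> A k" and "(\<Sum>k<5. A k) = 5/2"
    and "A 1 = 2 * (\<Sum>j<5. Mmat 1 j * A j)"
  shows "A 1 = 0" and "A 2 = 0" and "A 3 = 0" and "A 4 = 3/2"
proof -
  have row_1: "4 * A 4 = 6 + 3 * A 2"
    using assms(1,4) Mmat_transform(2)[of A] by linarith
  moreover have "A 1 + A 2 + A 3 + A 4 = 3/2"
    using assms(1,3) by (simp add: sum_lessThan_5)
  ultimately have "A 1 + 7/4 * A 2 + A 3 = 0"
    by linarith
  with nonneg show "A 1 = 0" "A 2 = 0" "A 3 = 0"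
    unfolding all_lessThan_5 by linarith+
  with row_1 show "A 4 = 3/2"
    by linarith
qed

lemma LP_feasible_unique:
  fixes A B :: "nat \<Rightarrow> real"
  assumes "LP_feasible A B"
  shows "A 0 = 1" "A 1 = 0" "A 2 = 0" "A 3 = 0" "A 4 = 3/2"
    and "B 0 = 1" "B 1 = 0" "B 2 = 20/7" "B 3 = 5/2" "B 4 = 51/14"
proof -
  show A: "A 0 = 1" "A 1 = 0" "A 2 = 0" "A 3 = 0" "A 4 = 3/2"
    using assms A_determined_by_row_1 unfolding LP_feasible_def by auto
  have "\<forall>i<5. B i = 2 * (\<Sum>j<5. Mmat i j * A j)" and "(\<Sum>k<5. A k) = 5/2"
    using assms unfolding LP_feasible_def by blast+
  then show "B 0 = 1" "B 1 = 0" "B 2 = 20/7" "B 3 = 5/2" "B 4 = 51/14"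
    unfolding all_lessThan_5 using A Mmat_transform[of A] by simp_all
qed

lemma LP_feasible_solution:
  fixes A B :: "nat \<Rightarrow> real"
  assumes A: "A 0 = 1" "A 1 = 0" "A 2 = 0" "A 3 = 0" "A 4 = 3/2"
    and B: "B 0 = 1" "B 1 = 0" "B 2 = 20/7" "B 3 = 5/2" "B 4 = 51/14"
  shows "LP_feasible A B"
proof -
  have sum_A: "(\<Sum>k<5. A k) = 5/2" and sum_B: "(\<Sum>k<5. B k) = 10"
    using A B by (simp_all add: sum_lessThan_5)
  have "\<forall>i<5. B i = 2 * (\<Sum>j<5. Mmat i j * A j)"
    unfolding all_lessThan_5 using A B sum_A Mmat_transform[of A] by (intro conjI) linarith+
  moreover have "\<forall>k<5. 0 \<le> A k \<and> A k \<le> B k"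
    unfolding all_lessThan_5 using A B by simp
  ultimately show ?thesis
    unfolding LP_feasible_def using A B sum_A sum_B by simp
qed

theorem mainTheorem12:
  fixes A B :: "nat \<Rightarrow> real"
  shows "LP_feasible A B \<longleftrightarrow>
    ((\<forall>k<5. A k = [1, 0, 0, 0, 3/2] ! k) \<and>
     (\<forall>k<5. B k = [1, 0, 20/7, 5/2, 51/14] ! k))"
proof
  assume "LP_feasible A B"
  from LP_feasible_unique[OF this]
  show "(\<forall>k<5. A k = [1, 0, 0, 0, 3/2] ! k) \<and> (\<forall>k<5. B k = [1, 0, 20/7, 5/2, 51/14] ! k)"
    unfolding all_lessThan_5 by simp
next
  assume "(\<forall>k<5. A k = [1, 0, 0, 0, 3/2] ! k) \<and> (\<forall>k<5. B k = [1, 0, 20/7, 5/2, 51/14] ! k)"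
  then show "LP_feasible A B"
    unfolding all_lessThan_5 by (intro LP_feasible_solution) simp_all
qed

end
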